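(* Let $d\ge1$ and let $P,Q\subset\mathbb{R}^d$ be finite point sets that are not $(1,\infty)$-separable. Then there exist $P^*\subseteq P$ and $Q^*\subseteq Q$ with $|P^*|+|Q^*|\le 2d+2$ such that $P^*$ and $Q^*$ are not $(1,\infty)$-separable. That is, $(1,\infty)$-separability has the Helly-type property with Helly number at most $2d+2$.
   Context: Finite sets $P,Q\subset\mathbb{R}^d$ are $(1,\infty)$-separable if $\mathrm{CH}(P)\cap Q=\emptyset$ or $P\cap\mathrm{CH}(Q)=\emptyset$, where $\mathrm{CH}$ denotes the convex hull (equivalently: one of the two sets can be covered by a single convex set and the other by arbitrarily many convex sets, with the two unions disjoint). *)

theory Defs
  imports "HOL-Analysis.Analysis"
begin

definition one_inf_separable :: "'a::real_vector set \<Rightarrow> 'a set \<Rightarrow> bool" where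
  "one_inf_separable P Q \<longleftrightarrow> convex hull P \<inter> Q = {} \<or> P \<inter> convex hull Q = {}"

end

theory Submission
  imports Defs
begin

text \<open>Non-separability yields p \<in> P \<inter> conv Q and q \<in> Q \<inter> conv P. Both survive
  on at most d + 1 points of P resp. Q that still contain p resp. q: a point of the
  relative boundary of conv S lies in a facet, hence by Caratheodory in the hull of aff_dim S
  points of S, and a point of the relative interior lies on a segment from p to such a boundary
  point, so adding p costs only one more point.\<close>

lemma rel_frontier_convex_hull_caratheodory:
  fixes S :: "'a::euclidean_space set"
  assumes "finite S" and "z \<in> rel_frontier (convex hull S)"
  obtains T where "T \<subseteq> S" "int (card T) \<le> aff_dim S" "z \<in> convex hull T"
proof -
  obtain F where F: "F facet_of convex hull S" "z \<in> F"
    using assms rel_frontier_of_polyhedron[OF polyhedron_convex_hull] by blast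
  obtain S' where "S' \<subseteq> S" and F_eq: "F = convex hull S'"
    using face_of_convex_hull_subset[OF finite_imp_compact[OF \<open>finite S\<close>] facet_of_imp_face_of[OF F(1)]] .
  then obtain T where T: "T \<subseteq> S'" "card T \<le> aff_dim S' + 1" "z \<in> convex hull T"
    using F(2) caratheodory_aff_dim[of S'] by blast
  have "aff_dim S' = aff_dim S - 1"
    using F(1) F_eq by (simp add: facet_of_def aff_dim_convex_hull)
  with T \<open>S' \<subseteq> S\<close> show thesis
    by (intro that[of T]) auto
qed

lemma rel_interior_in_segment_to_rel_frontier:
  fixes C :: "'a::euclidean_space set"
  assumes "bounded C" and y: "y \<in> rel_interior C" and p: "p \<in> affine hull C" and "y \<noteq> p"
  obtains z where "z \<in> rel_frontier C" "y \<in> closed_segment p z"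
proof -
  have "y \<in> affine hull C"
    using hull_inc[OF subsetD[OF rel_interior_subset y]] .
  then have "2 *\<^sub>R y + (1 - 2) *\<^sub>R p \<in> affine hull C"
    using p by (intro mem_affine affine_affine_hull) auto
  then have "y + (y - p) \<in> affine hull C"
    by (simp add: algebra_simps scaleR_2)
  moreover have "y - p \<noteq> 0"
    using \<open>y \<noteq> p\<close> by simp
  ultimately obtain t where "0 < t" and frontier: "y + t *\<^sub>R (y - p) \<in> rel_frontier C"
    using ray_to_rel_frontier[OF \<open>bounded C\<close> y] by blast
  define z where "z = y + t *\<^sub>R (y - p)"
  have "(1 + t) *\<^sub>R y = t *\<^sub>R p + z"
    by (simp add: z_def algebra_simps)
  have "1 - 1 / (1 + t) = t / (1 + t)"
    using \<open>0 < t\<close> by (simp add: field_simps)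
  have "y = (1 / (1 + t)) *\<^sub>R ((1 + t) *\<^sub>R y)"
    using \<open>0 < t\<close> by simp
  also have "\<dots> = (1 - 1 / (1 + t)) *\<^sub>R p + (1 / (1 + t)) *\<^sub>R z"
    unfolding \<open>(1 + t) *\<^sub>R y = t *\<^sub>R p + z\<close> \<open>1 - 1 / (1 + t) = t / (1 + t)\<close>
    by (simp add: scaleR_add_right)
  finally have "y \<in> closed_segment p z"
    using \<open>0 < t\<close> unfolding in_segment(1) by (intro exI[of _ "1 / (1 + t)"]) simp
  with frontier show thesis
    unfolding z_def by (rule that)
qed

lemma convex_hull_caratheodory_pinned:
  fixes S :: "'a::euclidean_space set"
  assumes "finite S" and "p \<in> S" and "y \<in> convex hull S"
  obtains T where "T \<subseteq> S" "p \<in> T" "int (card T) \<le> aff_dim S + 1" "y \<in> convex hull T"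
proof -
  have pinned_frontier:
    "\<exists>T. T \<subseteq> S \<and> p \<in> T \<and> int (card T) \<le> aff_dim S + 1 \<and> z \<in> convex hull T"
    if z: "z \<in> rel_frontier (convex hull S)" for z
  proof -
    obtain T where "T \<subseteq> S" "int (card T) \<le> aff_dim S" "z \<in> convex hull T"
      by (rule rel_frontier_convex_hull_caratheodory[OF \<open>finite S\<close> z])
    moreover have "finite T"
      using \<open>T \<subseteq> S\<close> \<open>finite S\<close> finite_subset by blast
    ultimately show ?thesis
      using \<open>p \<in> S\<close> hull_mono[of T "insert p T"]
      by (intro exI[of _ "insert p T"]) (auto simp: card_insert_if)
  qed
  have "y \<in> rel_interior (convex hull S) \<or> y \<in> rel_frontier (convex hull S)"
    using assms(3) rel_frontier_def closure_subset by auto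
  then consider "y = p" | "y \<in> rel_frontier (convex hull S)"
    | "y \<noteq> p" "y \<in> rel_interior (convex hull S)"
    by blast
  then show thesis
  proof cases
    case 1
    have "0 \<le> aff_dim S"
      using \<open>p \<in> S\<close> aff_dim_negative_iff[of S] by (metis empty_iff not_less)
    with 1 \<open>p \<in> S\<close> show thesis
      by (intro that[of "{p}"]) auto
  next
    case 2
    then show thesis
      using pinned_frontier that by blast
  next
    case 3
    have "p \<in> affine hull (convex hull S)"
      using \<open>p \<in> S\<close> by (simp add: hull_inc)
    then obtain z where "z \<in> rel_frontier (convex hull S)" "y \<in> closed_segment p z"
      using rel_interior_in_segment_to_rel_frontier
        [OF bounded_convex_hull[OF finite_imp_bounded[OF \<open>finite S\<close>]] 3(2) _ 3(1)]
      by blast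
    moreover obtain T where T: "T \<subseteq> S" "p \<in> T" "int (card T) \<le> aff_dim S + 1" "z \<in> convex hull T"
      using pinned_frontier[OF \<open>z \<in> rel_frontier (convex hull S)\<close>] by blast
    moreover have "closed_segment p z \<subseteq> convex hull T"
      unfolding segment_convex_hull using T(2,4) hull_inc[of p T]
      by (intro hull_minimal convex_convex_hull) auto
    ultimately show thesis
      using that by blast
  qed
qed

theorem mainTheorem8:
  fixes P Q :: "'a::euclidean_space set"
  assumes "finite P" and "finite Q"
    and "\<not> one_inf_separable P Q"
  shows "\<exists>P' Q'. P' \<subseteq> P \<and> Q' \<subseteq> Q \<and> card P' + card Q' \<le> 2 * DIM('a) + 2
            \<and> \<not> one_inf_separable P' Q'"
proof -
  obtain q p where q: "q \<in> convex hull P" "q \<in> Q" and p: "p \<in> P" "p \<in> convex hull Q"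
    using assms(3) unfolding one_inf_separable_def by blast
  obtain P' where P': "P' \<subseteq> P" "p \<in> P'" "int (card P') \<le> aff_dim P + 1" "q \<in> convex hull P'"
    using convex_hull_caratheodory_pinned[OF assms(1) p(1) q(1)] .
  obtain Q' where Q': "Q' \<subseteq> Q" "q \<in> Q'" "int (card Q') \<le> aff_dim Q + 1" "p \<in> convex hull Q'"
    using convex_hull_caratheodory_pinned[OF assms(2) q(2) p(2)] .
  have "card P' + card Q' \<le> 2 * DIM('a) + 2"
    using P'(3) Q'(3) aff_dim_le_DIM[of P] aff_dim_le_DIM[of Q] by linarith
  moreover have "\<not> one_inf_separable P' Q'"
    unfolding one_inf_separable_def using P' Q' by blast
  ultimately show ?thesis
    using P'(1) Q'(1) by blast
qed

end
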